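(* The composition $\mathcal F\circ\mathcal I$ is the identity map on $\mathcal F_\mathbb Z$.
   Context: Let $S_\mathbb Z$ be the group of finitely supported permutations of $\mathbb Z$. Let $\mathcal I_\mathbb Z=\{w\in S_\mathbb Z:w=w^{-1}\}$. Let $\Theta(i)=i-(-1)^i$ and $\mathcal F_\mathbb Z=\{w^{-1}\Theta w:w\in S_\mathbb Z\}$. For $y\in\mathcal I_\mathbb Z$, choose any even integer $m$ smaller than every element of $\mathrm{supp}(y)=\{i:y(i)\ne i\}$. Let $\phi:\mathbb Z\to\mathbb Z\setminus\mathrm{supp}(y)$ be the order-preserving bijection with $\phi(0)=m$. Define $\mathcal F(y)$ to be the unique element of $\mathcal F_\mathbb Z$ with $\mathcal F(y)(i)=y(i)$ for $i\in\mathrm{supp}(y)$ and $\mathcal F(y)\circ\phi=\phi\circ\Theta$. For $z\in\mathcal F_\mathbb Z$, let $\mathcal I(z)\in\mathcal I_\mathbb Z$ be the involution whose nontrivial cycles are exactly the cycles $(p,q)$ of $z$ with $p<q$ for which some cycle $(a,b)$ of $z$ with $a<b$ satisfies $p<b<q$. *)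

theory Defs
  imports Main
begin

definition supp :: "(int \<Rightarrow> int) \<Rightarrow> int set" where
  "supp w = {i. w i \<noteq> i}"

definition SZ :: "(int \<Rightarrow> int) set" where
  "SZ = {w. bij w \<and> finite (supp w)}"

definition IZ :: "(int \<Rightarrow> int) set" where
  "IZ = {w \<in> SZ. w \<circ> w = id}"

definition Theta :: "int \<Rightarrow> int" where
  "Theta i = i - (-1) ^ nat \<bar>i\<bar>"

definition FZ :: "(int \<Rightarrow> int) set" where
  "FZ = {inv w \<circ> Theta \<circ> w | w. w \<in> SZ}"

definition Fmap :: "(int \<Rightarrow> int) \<Rightarrow> (int \<Rightarrow> int)" where
  "Fmap y = (THE z. z \<in> FZ \<and> (\<forall>i \<in> supp y. z i = y i) \<and>
     (\<exists>m phi. even m \<and> (\<forall>i \<in> supp y. m < i) \<and>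
        strict_mono phi \<and> bij_betw phi UNIV (- supp y) \<and> phi 0 = m \<and>
        z \<circ> phi = phi \<circ> Theta))"

text \<open>The map I from F_Z to I_Z: keep exactly the cycles (p,q), p<q, of z for which
  some cycle (a,b), a<b, of z has p<b<q; all other points are fixed.\<close>
definition Imap :: "(int \<Rightarrow> int) \<Rightarrow> (int \<Rightarrow> int)" where
  "Imap z = (\<lambda>i. if i \<noteq> z i \<and> (\<exists>a b. a < b \<and> z a = b \<and> z b = a \<and>
                     min i (z i) < b \<and> b < max i (z i)) then z i else i)"

end

theory Submission
  imports Defs
begin

text \<open>
  An element \<open>z\<close> of \<open>FZ\<close> is a fixed-point-free involution that agrees with \<open>Theta\<close> off a
  finite set. A cycle \<open>(p, q)\<close> of \<open>z\<close> that \<open>Imap\<close> discards contains no right endpoint of another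
  cycle, so every point strictly between \<open>p\<close> and \<open>q\<close> is kept. Hence, if \<open>phi\<close> enumerates
  the points not kept in increasing order, \<open>z\<close> maps \<open>phi t\<close> to \<open>phi (t - 1)\<close> or \<open>phi (t + 1)\<close>.
  Far to the left \<open>phi\<close> is a translation by the even number \<open>phi 0\<close> and \<open>z = Theta\<close> there,
  and the pairing propagates to the right by induction: \<open>z \<circ> phi = phi \<circ> Theta\<close>, which is
  exactly the defining property of \<open>Fmap (Imap z)\<close>.
\<close>

lemma Theta_eq: "Theta i = (if even i then i - 1 else i + 1)"
  unfolding Theta_def by (auto simp: even_nat_iff)

lemma Theta_Theta [simp]: "Theta (Theta i) = i"
  by (simp add: Theta_eq)

lemma Theta_neq: "Theta i \<noteq> i"
  by (simp add: Theta_eq)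

lemma Theta_add_even: "even m \<Longrightarrow> Theta (m + t) = m + Theta t"
  by (simp add: Theta_eq)

lemma finite_int_set_strict_lower_bound:
  fixes A :: "int set"
  assumes "finite A"
  obtains L where "\<And>x. x \<in> A \<Longrightarrow> L < x"
proof -
  obtain M where "\<And>x. x \<in> A \<Longrightarrow> M \<le> x"
    using bdd_below_finite[OF assms] unfolding bdd_below_def by blast
  then show ?thesis by (intro that[of "M - 1"]) force
qed

lemma strict_mono_int_enum_below:
  fixes phi :: "int \<Rightarrow> int"
  assumes "strict_mono phi" and "\<And>i. i \<le> m \<Longrightarrow> i \<in> range phi" and "phi 0 = m"
    and "t \<le> 0"
  shows "phi t = m + t"
proof -
  have "phi (- int n) = m - int n" for n
  proof (induction n)
    case 0
    then show ?case using assms(3) by simp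
  next
    case (Suc n)
    obtain s where s: "phi s = m - int n - 1"
      using assms(2)[of "m - int n - 1"] by auto
    then have "phi s < phi (- int n)"
      using Suc by simp
    then have "s < - int n"
      using strict_mono_less[OF assms(1)] by blast
    then have "phi s \<le> phi (- int (Suc n))"
      using assms(1) by (simp add: strict_mono_less_eq)
    moreover have "phi (- int (Suc n)) < phi (- int n)"
      using assms(1) by (simp add: strict_mono_less)
    ultimately show ?case using s Suc by simp
  qed
  from this[of "nat (- t)"] show ?thesis using assms(4) by simp
qed

lemma strict_mono_int_enum_exists:
  fixes K :: "int set"
  assumes "finite K" and "\<And>i. i \<in> K \<Longrightarrow> m < i"
  obtains phi :: "int \<Rightarrow> int"
    where "strict_mono phi" "bij_betw phi UNIV (- K)" "phi 0 = m"
proof -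
  have "\<exists>phi :: int \<Rightarrow> int. strict_mono phi \<and> bij_betw phi UNIV (- K) \<and> phi 0 = m"
    using assms
  proof (induction K rule: finite_induct)
    case empty
    have "bij_betw (\<lambda>t. m + t) UNIV (UNIV :: int set)"
      by (rule bij_betw_byWitness[where f' = "\<lambda>t. t - m"]) auto
    moreover have "strict_mono (\<lambda>t. m + t)"
      by (auto simp: strict_mono_def)
    ultimately show ?case by auto
  next
    case (insert k F)
    then obtain phi :: "int \<Rightarrow> int"
      where phi: "strict_mono phi" "bij_betw phi UNIV (- F)" "phi 0 = m"
      by auto
    obtain s where s: "phi s = k"
      using insert(2) phi(2) unfolding bij_betw_def by (metis ComplI imageE)
    have "0 < s"
      using s phi insert(4) by (metis insertI1 strict_mono_less)
    define psi where "psi t = (if t < s then phi t else phi (t + 1))" for t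
    have psi_mono: "strict_mono psi"
      unfolding strict_mono_def psi_def using phi(1) by (auto simp: strict_mono_less)
    have "range psi = - insert k F"
    proof (intro equalityI subsetI)
      fix x assume "x \<in> range psi"
      then obtain t where "x = psi t" by auto
      then show "x \<in> - insert k F"
        using phi s unfolding psi_def bij_betw_def by (auto simp: strict_mono_eq)
    next
      fix x assume x: "x \<in> - insert k F"
      then obtain u where u: "phi u = x"
        using phi(2) unfolding bij_betw_def by (metis ComplD ComplI imageE insert_iff)
      with s x have "u \<noteq> s" by auto
      then have "psi (if u < s then u else u - 1) = x"
        using u unfolding psi_def by auto
      then show "x \<in> range psi" by (metis rangeI)
    qed
    then have "bij_betw psi UNIV (- insert k F)"
      unfolding bij_betw_def using psi_mono strict_mono_imp_inj_on by blast
    moreover have "psi 0 = m"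
      using \<open>0 < s\<close> phi(3) unfolding psi_def by simp
    ultimately show ?case using psi_mono by blast
  qed
  with that show ?thesis by blast
qed

locale fixpoint_free_involution =
  fixes z :: "int \<Rightarrow> int"
  assumes involution [simp]: "z (z i) = i"
    and no_fixpoint: "z i \<noteq> i"

locale almost_Theta = fixpoint_free_involution +
  assumes finite_diff_Theta: "finite {i. z i \<noteq> Theta i}"

lemma FZ_almost_Theta:
  assumes "z \<in> FZ"
  shows "almost_Theta z"
proof -
  obtain w where w: "bij w" "finite (supp w)" and z: "z = inv w \<circ> Theta \<circ> w"
    using assms unfolding FZ_def SZ_def by auto
  have inv_w [simp]: "inv w (w x) = x" "w (inv w x) = x" for x
    using w(1) by (simp_all add: bij_is_inj bij_is_surj surj_f_inv_f)
  have "z i \<noteq> i" for i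
    using Theta_neq[of "w i"] by (metis z comp_apply inv_w(2))
  moreover have "{i. z i \<noteq> Theta i} \<subseteq> supp w \<union> Theta -` supp w"
    using z by (auto simp: supp_def) (metis inv_w(1))
  then have "finite {i. z i \<noteq> Theta i}"
    using w(2) by (meson finite_UnI finite_subset finite_vimageI inj_on_inverseI Theta_Theta)
  ultimately show ?thesis
    by unfold_locales (simp_all add: z)
qed

definition Imap_kept :: "(int \<Rightarrow> int) \<Rightarrow> int \<Rightarrow> bool" where
  "Imap_kept z i \<longleftrightarrow>
     (\<exists>a b. a < b \<and> z a = b \<and> z b = a \<and> min i (z i) < b \<and> b < max i (z i))"

lemma Imap_kept_imp_neq_Theta: "Imap_kept z i \<Longrightarrow> z i \<noteq> Theta i"
  unfolding Imap_kept_def Theta_eq by (auto simp: min_def max_def split: if_splits)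

context fixpoint_free_involution
begin

lemma Imap_kept_partner: "Imap_kept z (z i) = Imap_kept z i"
  unfolding Imap_kept_def by (simp add: min.commute max.commute)

lemma Imap_kept_inside_unkept:
  assumes "\<not> Imap_kept z j" and "min j (z j) < x" and "x < max j (z j)"
  shows "Imap_kept z x"
proof -
  define p q where "p = min j (z j)" and "q = max j (z j)"
  have pq: "p < q" "z p = q" "z q = p"
    using no_fixpoint[of j] by (auto simp: p_def q_def min_def max_def)
  have "\<not> Imap_kept z p"
    using assms(1) Imap_kept_partner by (simp add: p_def min_def)
  have x: "p < x" "x < q"
    using assms(2,3) by (simp_all add: p_def q_def)
  show ?thesis
  proof (cases "max x (z x) < q")
    case True
    have "Imap_kept z p"
      unfolding Imap_kept_def
      using True pq x no_fixpoint[of x]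
      by (intro exI[of _ "min x (z x)"] exI[of _ "max x (z x)"]) (auto simp: min_def max_def)
    with \<open>\<not> Imap_kept z p\<close> show ?thesis ..
  next
    case False
    have "z x \<noteq> q"
      using pq x by (metis involution less_irrefl)
    with False x have "q < z x"
      by (auto simp: max_def split: if_splits)
    then show ?thesis
      unfolding Imap_kept_def using pq x by (intro exI[of _ p] exI[of _ q]) simp
  qed
qed

lemma Imap_eq: "Imap z = (\<lambda>i. if Imap_kept z i then z i else i)"
  unfolding Imap_def Imap_kept_def using no_fixpoint by (intro ext) auto

lemma supp_Imap: "supp (Imap z) = {i. Imap_kept z i}"
  unfolding supp_def Imap_eq using no_fixpoint by auto

lemma Imap_involution: "Imap z \<circ> Imap z = id"
  by (auto simp: Imap_eq Imap_kept_partner)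

lemma enum_unkept_partner_adjacent:
  fixes phi :: "int \<Rightarrow> int"
  assumes phi: "strict_mono phi" "range phi = {i. \<not> Imap_kept z i}"
  shows "z (phi t) = phi (t - 1) \<or> z (phi t) = phi (t + 1)"
proof -
  have unkept: "\<not> Imap_kept z (phi u)" for u
    using phi(2) by auto
  then have "z (phi t) \<in> range phi"
    using phi(2) Imap_kept_partner by simp
  then obtain s where s: "z (phi t) = phi s"
    by auto
  have "s \<noteq> t"
    using s no_fixpoint by metis
  moreover have "\<not> (s \<ge> t + 2 \<or> s \<le> t - 2)"
  proof
    assume "s \<ge> t + 2 \<or> s \<le> t - 2"
    moreover define u where "u = (if s \<ge> t + 2 then t + 1 else t - 1)"
    ultimately have "min t s < u" "u < max t s"
      by auto
    then have "min (phi t) (phi s) < phi u" "phi u < max (phi t) (phi s)"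
      using phi(1) by (simp_all add: min_of_mono max_of_mono strict_mono_mono strict_mono_less)
    then show False
      using Imap_kept_inside_unkept[of "phi t" "phi u"] unkept s by simp
  qed
  ultimately have "s = t - 1 \<or> s = t + 1"
    by linarith
  with s show ?thesis
    by auto
qed

lemma adjacent_pairing_Theta_step:
  fixes phi :: "int \<Rightarrow> int"
  assumes "inj phi"
    and adjacent: "z (phi (n + 1)) = phi n \<or> z (phi (n + 1)) = phi (n + 2)"
    and "z (phi n) = phi (Theta n)"
  shows "z (phi (n + 1)) = phi (Theta (n + 1))"
proof (cases "even n")
  case True
  have "z (phi (n + 1)) \<noteq> phi n"
  proof
    assume "z (phi (n + 1)) = phi n"
    then have "phi (n + 1) = phi (n - 1)"
      using assms(3) True by (metis involution Theta_eq)
    then show False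
      using injD[OF assms(1)] by fastforce
  qed
  with adjacent True show ?thesis
    by (simp add: Theta_eq add.assoc)
next
  case False
  then show ?thesis
    using assms(3) by (metis involution Theta_eq add_diff_cancel_right' odd_add odd_one)
qed

end

context almost_Theta
begin

lemma enum_unkept_comp_Theta:
  fixes phi :: "int \<Rightarrow> int"
  assumes "even m" and below: "\<forall>i \<in> {i. Imap_kept z i}. m < i"
    and phi: "strict_mono phi" "bij_betw phi UNIV (- {i. Imap_kept z i})" "phi 0 = m"
  shows "z \<circ> phi = phi \<circ> Theta"
proof -
  have range: "range phi = {i. \<not> Imap_kept z i}"
    using phi(2) by (auto simp: bij_betw_def)
  obtain L where L: "\<And>i. z i \<noteq> Theta i \<Longrightarrow> L < i"
    using finite_int_set_strict_lower_bound[OF finite_diff_Theta] by auto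
  have phi_left: "phi s = m + s" if "s \<le> 0" for s
    using strict_mono_int_enum_below[OF phi(1) _ phi(3) that] below range by force
  define t0 where "t0 = min 0 (L - m) - 2"
  have far_left: "z (phi s) = phi (Theta s)" if "s \<le> t0" for s
  proof -
    have "z (m + s) = Theta (m + s)"
      using L[of "m + s"] that by (force simp: t0_def)
    moreover have "Theta s \<le> 0"
      using that by (auto simp: t0_def Theta_eq min_def split: if_split_asm)
    ultimately show ?thesis
      using that phi_left Theta_add_even[OF \<open>even m\<close>] by (simp add: t0_def)
  qed
  have "z (phi t) = phi (Theta t)" if "t0 \<le> t" for t
    using that
  proof (induction t rule: int_ge_induct)
    case base
    show ?case using far_left by simp
  next
    case (step n)
    then show ?case
      using adjacent_pairing_Theta_step[OF strict_mono_imp_inj_on[OF phi(1)]]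
        enum_unkept_partner_adjacent[OF phi(1) range, of "n + 1"]
      by (simp add: add.assoc)
  qed
  with far_left have "z (phi t) = phi (Theta t)" for t
    by (meson linorder_le_cases)
  then show ?thesis
    by (simp add: fun_eq_iff)
qed

lemma finite_Imap_kept: "finite {i. Imap_kept z i}"
  by (rule finite_subset[OF _ finite_diff_Theta]) (auto dest: Imap_kept_imp_neq_Theta)

lemma Imap_in_IZ: "Imap z \<in> IZ"
  using o_bij[OF Imap_involution Imap_involution]
  by (simp add: IZ_def SZ_def supp_Imap finite_Imap_kept Imap_involution)

lemma eq_if_agrees_on_Imap_kept:
  fixes phi :: "int \<Rightarrow> int"
  assumes kept: "\<forall>i \<in> {i. Imap_kept z i}. z' i = Imap z i"
    and "even m" "\<forall>i \<in> {i. Imap_kept z i}. m < i"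
    and phi: "strict_mono phi" "bij_betw phi UNIV (- {i. Imap_kept z i})" "phi 0 = m"
    and z'_phi: "z' \<circ> phi = phi \<circ> Theta"
  shows "z' = z"
proof
  fix i
  show "z' i = z i"
  proof (cases "Imap_kept z i")
    case True
    with kept show ?thesis by (simp add: Imap_eq)
  next
    case False
    with phi(2) obtain t where "i = phi t"
      by (auto simp: bij_betw_def)
    with z'_phi enum_unkept_comp_Theta[OF assms(2-3) phi] show ?thesis
      by (metis comp_apply)
  qed
qed

lemma Fmap_Imap:
  assumes "z \<in> FZ"
  shows "Fmap (Imap z) = z"
  unfolding Fmap_def supp_Imap
proof (rule the_equality)
  obtain L where "\<And>i. Imap_kept z i \<Longrightarrow> L < i"
    using finite_int_set_strict_lower_bound[OF finite_Imap_kept] by auto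
  moreover define m where "m = 2 * (L div 2)"
  ultimately have m: "even m" "\<forall>i \<in> {i. Imap_kept z i}. m < i"
    by force+
  obtain phi :: "int \<Rightarrow> int"
    where phi: "strict_mono phi" "bij_betw phi UNIV (- {i. Imap_kept z i})" "phi 0 = m"
    using strict_mono_int_enum_exists[OF finite_Imap_kept] m(2) by auto
  show "z \<in> FZ \<and> (\<forall>i \<in> {i. Imap_kept z i}. z i = Imap z i) \<and>
      (\<exists>m phi. even m \<and> (\<forall>i \<in> {i. Imap_kept z i}. m < i) \<and> strict_mono phi \<and>
         bij_betw phi UNIV (- {i. Imap_kept z i}) \<and> phi 0 = m \<and> z \<circ> phi = phi \<circ> Theta)"
    using assms m phi enum_unkept_comp_Theta[OF m phi] by (auto simp: Imap_eq)
qed (use eq_if_agrees_on_Imap_kept in blast)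

end

theorem proposition3p7:
  shows "\<forall>z \<in> FZ. Imap z \<in> IZ \<and> Fmap (Imap z) = z"
proof
  fix z
  assume "z \<in> FZ"
  then interpret almost_Theta z
    by (rule FZ_almost_Theta)
  show "Imap z \<in> IZ \<and> Fmap (Imap z) = z"
    using Imap_in_IZ Fmap_Imap[OF \<open>z \<in> FZ\<close>] by blast
qed

end
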